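(* Let $n$ be even. Up to scaling there is a unique non-zero $\mathrm{GL}_n(\mathbb{R})$-equivariant map $(\mathbb{P}(\mathbb{R}^n))^{q}\to\mathbb{R}_\varepsilon$ for $q=n+1$, and there is no non-zero such map for $q\le n$.
   Context: $\mathbb{P}(\mathbb{R}^n)$ is real projective space with the diagonal $\mathrm{GL}_n(\mathbb{R})$-action on tuples. $\mathbb{R}_\varepsilon$ denotes $\mathbb{R}$ with $g\in\mathrm{GL}_n(\mathbb{R})$ acting by multiplication by $\varepsilon(g)=\operatorname{sign}\det g$. A map $f$ is equivariant if $f(gx_0,\dots,gx_{q-1})=\varepsilon(g)f(x_0,\dots,x_{q-1})$ for all $g$ and all tuples (arbitrary functions, no measurability required). *)

theory Defs
  imports "HOL-Analysis.Analysis"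
begin

definition proj_space :: "(real^'n) set set" where
  "proj_space = {L. subspace L \<and> dim L = 1}"

definition act_line :: "real^'n^'n \<Rightarrow> (real^'n) set \<Rightarrow> (real^'n) set" where
  "act_line g L = (\<lambda>v. g *v v) ` L"

definition proj_tuples :: "nat \<Rightarrow> (real^'n) set list set" where
  "proj_tuples q = {xs. length xs = q \<and> set xs \<subseteq> proj_space}"

definition eps :: "real^'n^'n \<Rightarrow> real" where
  "eps g = sgn (det g)"

text \<open>f : P(R^n)^q \<rightarrow> R_eps is GL_n(R)-equivariant (only values on q-tuples
  of points of P(R^n) matter).\<close>
definition equivariant :: "nat \<Rightarrow> ((real^'n) set list \<Rightarrow> real) \<Rightarrow> bool" where
  "equivariant q f \<longleftrightarrow>
     (\<forall>g::real^'n^'n. invertible g \<longrightarrow>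
        (\<forall>xs \<in> proj_tuples q. f (map (act_line g) xs) = eps g * f xs))"

definition nonzero_map :: "nat \<Rightarrow> ((real^'n) set list \<Rightarrow> real) \<Rightarrow> bool" where
  "nonzero_map q f \<longleftrightarrow> (\<exists>xs \<in> (proj_tuples q :: (real^'n) set list set). f xs \<noteq> 0)"

end

theory Submission
  imports Defs
begin

(* Uniqueness and the vanishing statements rest on one observation: an equivariant map
   vanishes on every tuple that is fixed by some matrix of negative determinant. Using
   (oblique) reflections we show that such a stabiliser exists whenever all points of a
   tuple but one lie in a proper subspace; this covers all tuples of at most n points.

   For q = n+1, a tuple without such a stabiliser is in general position, hence the image
   g\<cdot>frame of the standard projective frame [(1,...,1), e_1, ..., e_n]. The stabiliser of
   the frame consists of scalar matrices, which have positive determinant because n is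
   even, so \<epsilon>(g) depends only on g\<cdot>frame. The map g\<cdot>frame \<mapsto> \<epsilon>(g), extended by zero,
   is therefore a well-defined non-zero equivariant map, and every equivariant map equals
   it times its value at the frame. *)

lemma span_scaleR_singleton:
  fixes w :: "'a::real_vector"
  assumes "c \<noteq> 0"
  shows "span {c *\<^sub>R w} = span {w}"
proof (rule subset_antisym)
  show "span {c *\<^sub>R w} \<subseteq> span {w}"
    by (simp add: span_minimal span_base span_mul)
  have "w = inverse c *\<^sub>R (c *\<^sub>R w)" using assms by simp
  then show "span {w} \<subseteq> span {c *\<^sub>R w}"
    by (metis span_base span_mul singletonI span_minimal subspace_span empty_subsetI insert_subset)
qed

lemma proj_space_iff: "L \<in> proj_space \<longleftrightarrow> (\<exists>w. w \<noteq> 0 \<and> L = span {w})"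
proof
  assume L: "L \<in> proj_space"
  then have sL: "subspace L" and dL: "dim L = 1" by (auto simp: proj_space_def)
  have "\<not> L \<subseteq> {0}" using dL by (metis dim_eq_0 zero_neq_one)
  then obtain w where "w \<in> L" "w \<noteq> 0" by blast
  moreover have "L = span {w}"
    using subspace_dim_equal[of "span {w}" L] sL dL \<open>w \<in> L\<close> \<open>w \<noteq> 0\<close>
    by (simp add: span_minimal subspace_span)
  ultimately show "\<exists>w. w \<noteq> 0 \<and> L = span {w}" by blast
next
  assume "\<exists>w. w \<noteq> 0 \<and> L = span {w}"
  then show "L \<in> proj_space" by (auto simp: proj_space_def)
qed

lemma proj_tuples_representatives:
  assumes "xs \<in> proj_tuples q"
  obtains r where "\<And>k. k < q \<Longrightarrow> r k \<noteq> 0 \<and> xs ! k = span {r k}"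
proof -
  have "\<forall>k. \<exists>w. k < q \<longrightarrow> w \<noteq> 0 \<and> xs ! k = span {w}"
    using assms by (auto simp: proj_tuples_def proj_space_iff dest!: nth_mem)
  then show thesis using that by metis
qed

lemma dim_union_lines_le:
  assumes "finite K"
  shows "dim (\<Union>k\<in>K. span {v k}) \<le> card K"
proof -
  have "dim (\<Union>k\<in>K. span {v k}) \<le> card (v ` K)"
  proof (rule dim_le_card)
    show "(\<Union>k\<in>K. span {v k}) \<subseteq> span (v ` K)" by (intro UN_least span_mono) auto
  qed (simp add: assms)
  also have "\<dots> \<le> card K" using assms by (rule card_image_le)
  finally show ?thesis .
qed

lemma act_line_span: "act_line g (span S) = span ((\<lambda>v. g *v v) ` S)"
  unfolding act_line_def by (simp add: span_linear_image matrix_vector_mul_linear)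

lemma act_line_mult: "act_line (A ** B) L = act_line A (act_line B L)"
  unfolding act_line_def image_image by (simp only: matrix_vector_mul_assoc)

lemma act_line_id [simp]: "act_line (mat 1) L = L"
  unfolding act_line_def by simp

lemma act_line_fixed:
  assumes "\<And>x. x \<in> L \<Longrightarrow> g *v x = x"
  shows "act_line g L = L"
  using assms unfolding act_line_def by (simp cong: image_cong)

lemma eps_mult: "eps (A ** B) = eps A * eps B"
  by (simp add: eps_def det_mul sgn_mult)

lemma map_act_line_mult: "map (act_line (A ** B)) xs = map (act_line A) (map (act_line B) xs)"
  by (simp add: act_line_mult)

lemma map_act_line_inverse:
  assumes "B ** A = mat 1"
  shows "map (act_line B) (map (act_line A) xs) = xs"
proof -
  have "map (act_line B) (map (act_line A) xs) = map (act_line (mat 1)) xs"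
    by (simp only: map_act_line_mult[symmetric] assms)
  then show ?thesis by (metis act_line_id map_idI)
qed

(* The (possibly oblique) reflection v \<mapsto> v - 2 (a\<bullet>v)/(a\<bullet>w) w, which fixes the hyperplane
  orthogonal to a and negates w. *)
definition reflection :: "real^'n::finite \<Rightarrow> real^'n \<Rightarrow> real^'n^'n" where
  "reflection a w = (\<chi> i j. mat 1 $ i $ j - 2 * w $ i * a $ j / (a \<bullet> w))"

lemma reflection_apply:
  "reflection a w *v v = v - (2 * (a \<bullet> v) / (a \<bullet> w)) *\<^sub>R w"
proof -
  have "(\<Sum>j\<in>UNIV. (mat 1 $ i $ j - 2 * w $ i * a $ j / (a \<bullet> w)) * v $ j)
        = v $ i - 2 * (a \<bullet> v) / (a \<bullet> w) * w $ i" for i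
  proof -
    have "(\<Sum>j\<in>UNIV. mat 1 $ i $ j * v $ j) = v $ i"
      using matrix_vector_mul_lid[of v] by (simp add: matrix_vector_mult_def vec_eq_iff)
    moreover have "(\<Sum>j\<in>UNIV. 2 * w $ i * a $ j / (a \<bullet> w) * v $ j)
        = 2 * (a \<bullet> v) / (a \<bullet> w) * w $ i"
      by (simp add: inner_vec_def sum_distrib_left sum_divide_distrib algebra_simps)
    ultimately show ?thesis by (simp add: left_diff_distrib sum_subtractf)
  qed
  then show ?thesis by (simp add: vec_eq_iff matrix_vector_mult_def reflection_def)
qed

lemma det_identity_plus_column:
  fixes d :: "'a::field^'n::finite"
  shows "det (\<chi> i j. mat 1 $ i $ j + (if j = k then d $ i else 0)) = 1 + d $ k"
proof -
  have "(\<chi> i j. mat 1 $ i $ j + (if j = k then d $ i else 0))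
      = (\<chi> i j. if j = k then (mat 1 *v (axis k 1 + d)) $ i else mat 1 $ i $ j)"
    unfolding matrix_vector_mul_lid by (simp add: vec_eq_iff mat_def axis_def)
  then show ?thesis by (simp add: cramer_lemma axis_def)
qed

lemma identity_plus_column_apply:
  fixes d :: "'a::comm_ring_1^'n::finite"
  shows "(\<chi> i j. mat 1 $ i $ j + (if j = k then d $ i else 0)) *v y = y + (y $ k) *s d"
proof -
  have "(\<Sum>j\<in>UNIV. (mat 1 $ i $ j + (if j = k then d $ i else 0)) * y $ j) = y $ i + y $ k * d $ i" for i
  proof -
    have "(mat 1 $ i $ j + (if j = k then d $ i else 0)) * y $ j
        = mat 1 $ i $ j * y $ j + (if j = k then y $ k * d $ i else 0)" for j
      by (simp add: algebra_simps)
    then show ?thesis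
      using matrix_vector_mul_lid[of y]
      by (simp add: sum.distrib matrix_vector_mult_def vec_eq_iff mult.commute)
  qed
  then show ?thesis by (simp add: vec_eq_iff matrix_vector_mult_def)
qed

(* Every reflection has determinant -1: after an orthogonal change of basis sending
  a to a coordinate axis it becomes the identity plus a column perturbation. *)
lemma det_reflection:
  fixes a w :: "real^'n::finite"
  assumes aw: "a \<bullet> w \<noteq> 0"
  shows "det (reflection a w) = -1"
proof -
  obtain k :: 'n where True by simp
  define a' where "a' = a /\<^sub>R norm a"
  have "a \<noteq> 0" using aw by auto
  then have "norm a' = 1" by (simp add: a'_def)
  then obtain A where orth: "orthogonal_matrix A" and Ak: "A *v axis k 1 = a'"
    using orthogonal_matrix_exists_basis by metis
  have AAt: "A ** transpose A = mat 1"
    using orth by (simp add: orthogonal_matrix_def)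
  have coord: "(transpose A *v v) $ k = a' \<bullet> v" for v
  proof -
    have "A $ i $ k = a' $ i" for i
      using Ak by (simp add: matrix_vector_mult_basis column_def vec_eq_iff)
    then show ?thesis
      by (simp add: matrix_vector_mult_def transpose_def inner_vec_def mult.commute)
  qed
  have a'w: "a' \<bullet> w \<noteq> 0" using aw \<open>a \<noteq> 0\<close> by (simp add: a'_def)
  define d where "d = - (2 / (a' \<bullet> w)) *\<^sub>R (transpose A *v w)"
  define E :: "real^'n^'n" where "E = (\<chi> i j. mat 1 $ i $ j + (if j = k then d $ i else 0))"
  have dk: "d $ k = -2" using a'w by (simp add: d_def coord del: transpose_matrix_vector)
  have "reflection a w = A ** E ** transpose A"
  proof (subst matrix_eq, intro allI)
    fix v
    have "(A ** E ** transpose A) *v v = A *v (transpose A *v v + (a' \<bullet> v) *\<^sub>R d)"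
      by (simp add: matrix_vector_mul_assoc[symmetric] E_def identity_plus_column_apply coord
          scalar_mult_eq_scaleR del: transpose_matrix_vector)
    also have "\<dots> = v - (2 * (a' \<bullet> v) / (a' \<bullet> w)) *\<^sub>R w"
      by (simp add: d_def matrix_vector_right_distrib matrix_vector_mult_scaleR
          matrix_vector_mul_assoc AAt algebra_simps del: transpose_matrix_vector)
    also have "\<dots> = reflection a w *v v"
      using \<open>a \<noteq> 0\<close> by (simp add: reflection_apply a'_def)
    finally show "reflection a w *v v = (A ** E ** transpose A) *v v" ..
  qed
  moreover have "det A * det A = 1"
    using AAt by (metis det_I det_mul det_transpose)
  ultimately show ?thesis
    by (simp add: det_mul E_def det_identity_plus_column dk)
qed

lemma reflection_reverses_orientation:
  fixes a w :: "real^'n::finite"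
  assumes "a \<bullet> w \<noteq> 0"
  shows "invertible (reflection a w)" "eps (reflection a w) = -1"
  using det_reflection[OF assms] by (simp_all add: invertible_det_nz eps_def)

lemma reversing_map_fixing_subspace:
  fixes S :: "(real^'n::finite) set" and u :: "real^'n"
  assumes "dim S < CARD('n)"
  obtains g :: "real^'n^'n" where "invertible g" "eps g = -1"
    "\<And>x. x \<in> span S \<Longrightarrow> g *v x = x" "g *v u = u \<or> g *v u = - u"
proof (cases "u \<in> span S")
  case True
  obtain p :: "real^'n" where "p \<noteq> 0" and p: "\<And>y. y \<in> span S \<Longrightarrow> p \<bullet> y = 0"
    using orthogonal_to_subspace_exists[of S] assms unfolding orthogonal_def by auto
  then have "p \<bullet> p \<noteq> 0" by simp
  show thesis
  proof (rule that[of "reflection p p"])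
    show "reflection p p *v x = x" if "x \<in> span S" for x
      using p[OF that] by (simp add: reflection_apply)
    then show "reflection p p *v u = u \<or> reflection p p *v u = - u"
      using True by blast
  qed (use reflection_reverses_orientation[OF \<open>p \<bullet> p \<noteq> 0\<close>] in auto)
next
  case False
  obtain y z where y: "y \<in> span S" and z: "\<And>x. x \<in> span S \<Longrightarrow> z \<bullet> x = 0"
    and u: "u = y + z"
    using orthogonal_subspace_decomp_exists[of S u] unfolding orthogonal_def by metis
  have "z \<noteq> 0" using False y u by auto
  have "z \<bullet> u = z \<bullet> z" using z[OF y] by (simp add: u inner_add_right)
  with \<open>z \<noteq> 0\<close> have zu: "z \<bullet> u \<noteq> 0" by simp
  show thesis
  proof (rule that[of "reflection z u"])
    show "reflection z u *v x = x" if "x \<in> span S" for x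
      using z[OF that] by (simp add: reflection_apply)
    have "reflection z u *v u = u - 2 *\<^sub>R u"
      using zu by (simp add: reflection_apply)
    then show "reflection z u *v u = u \<or> reflection z u *v u = - u"
      by (simp add: scaleR_2)
  qed (use reflection_reverses_orientation[OF zu] in auto)
qed

definition has_reversing_stabiliser :: "(real^'n::finite) set list \<Rightarrow> bool" where
  "has_reversing_stabiliser xs \<longleftrightarrow>
     (\<exists>g::real^'n^'n. invertible g \<and> eps g = -1 \<and> map (act_line g) xs = xs)"

(* Equivariant maps vanish on tuples with an orientation-reversing stabiliser,
  since there f xs = -f xs. *)
lemma equivariant_vanishes:
  assumes "equivariant q f" "xs \<in> proj_tuples q" "has_reversing_stabiliser xs"
  shows "f xs = 0"
proof -
  obtain g where g: "invertible g" "eps g = -1" and fixes_xs: "map (act_line g) xs = xs"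
    using assms(3) unfolding has_reversing_stabiliser_def by blast
  have "f (map (act_line g) xs) = eps g * f xs"
    using assms(1,2) g(1) unfolding equivariant_def by blast
  then show ?thesis using g(2) fixes_xs by simp
qed

lemma reversing_stabiliser_if_degenerate:
  fixes xs :: "(real^'n::finite) set list"
  assumes xs: "xs \<in> proj_tuples q" and S: "dim S < CARD('n)"
    and others: "\<And>k. k < q \<Longrightarrow> k \<noteq> j \<Longrightarrow> xs ! k \<subseteq> span S"
  shows "has_reversing_stabiliser xs"
proof -
  obtain r where r: "\<And>k. k < q \<Longrightarrow> r k \<noteq> 0 \<and> xs ! k = span {r k}"
    using proj_tuples_representatives[OF xs] by blast
  obtain g :: "real^'n^'n" where g: "invertible g" "eps g = -1"
    and fix_S: "\<And>x. x \<in> span S \<Longrightarrow> g *v x = x" and gr: "g *v r j = r j \<or> g *v r j = - r j"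
    using reversing_map_fixing_subspace[OF S, of "r j"] by blast
  have "act_line g (xs ! k) = xs ! k" if k: "k < q" for k
  proof (cases "k = j")
    case True
    have "span {g *v r j} = span {r j}"
    proof (cases "g *v r j = r j")
      case False
      then have "g *v r j = (-1) *\<^sub>R r j" using gr by simp
      then show ?thesis by (simp only: span_scaleR_singleton[of "-1"])
    qed simp
    then show ?thesis using r[OF k] True by (simp add: act_line_span)
  next
    case False
    show ?thesis
      by (rule act_line_fixed) (use others[OF k False] fix_S in blast)
  qed
  moreover have "length xs = q" using xs by (simp add: proj_tuples_def)
  ultimately have "map (act_line g) xs = xs" by (simp add: list_eq_iff_nth_eq)
  then show ?thesis using g unfolding has_reversing_stabiliser_def by blast
qed

lemma short_tuples_have_reversing_stabiliser:
  fixes xs :: "(real^'n::finite) set list"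
  assumes xs: "xs \<in> proj_tuples q" and q: "q \<le> CARD('n)"
  shows "has_reversing_stabiliser xs"
proof -
  obtain r where r: "\<And>k. k < q \<Longrightarrow> r k \<noteq> 0 \<and> xs ! k = span {r k}"
    using proj_tuples_representatives[OF xs] by blast
  define S where "S = (\<Union>k\<in>{1..<q}. span {r k})"
  have "dim S \<le> q - 1" using dim_union_lines_le[of "{1..<q}" r] by (simp add: S_def)
  moreover have "0 < CARD('n)" by simp
  ultimately have "dim S < CARD('n)" using q by linarith
  moreover have "xs ! k \<subseteq> span S" if "k < q" "k \<noteq> 0" for k
  proof -
    have "k \<in> {1..<q}" using that by simp
    then have "span {r k} \<subseteq> S" unfolding S_def by (rule UN_upper)
    then have "xs ! k \<subseteq> S" using r[OF that(1)] by simp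
    then show ?thesis using span_superset by blast
  qed
  ultimately show ?thesis by (rule reversing_stabiliser_if_degenerate[OF xs])
qed

(* An enumeration 0, ..., n-1 of the coordinate index type, used to list the
  coordinate axes in the frame. *)
lemma to_nat_on_UNIV_less: "to_nat_on (UNIV :: 'n::finite set) c < CARD('n)"
  using to_nat_on_finite[of "UNIV :: 'n set"] by (auto simp: bij_betw_def)

lemma range_to_nat_on_UNIV: "range (to_nat_on (UNIV :: 'n::finite set)) = {..<CARD('n)}"
  using to_nat_on_finite[of "UNIV :: 'n set"] by (simp add: bij_betw_def)

lemma from_nat_into_to_nat_on_UNIV [simp]:
  "from_nat_into UNIV (to_nat_on UNIV c) = (c :: 'n::finite)"
  by (simp add: countable_finite)

lemma to_nat_on_from_nat_into_UNIV [simp]: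
  "k < CARD('n::finite) \<Longrightarrow> to_nat_on UNIV (from_nat_into UNIV k :: 'n) = k"
  using to_nat_on_finite[of "UNIV :: 'n set"] by (auto simp: bij_betw_def intro: to_nat_on_from_nat_into)

definition frame :: "(real^'n::finite) set list" where
  "frame = span {vec 1} # map (\<lambda>k. span {axis (from_nat_into UNIV k) 1}) [0..<CARD('n)]"

lemma length_frame [simp]: "length (frame :: (real^'n::finite) set list) = CARD('n) + 1"
  by (simp add: frame_def)

lemma frame_nth_0: "frame ! 0 = span {vec 1}"
  by (simp add: frame_def)

lemma frame_nth_Suc:
  "k < CARD('n::finite) \<Longrightarrow> frame ! Suc k = span {axis (from_nat_into UNIV k :: 'n) 1}"
  by (simp add: frame_def)

lemma frame_nth_coordinate: "frame ! Suc (to_nat_on UNIV c) = span {axis (c :: 'n::finite) 1}"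
  by (simp add: frame_nth_Suc to_nat_on_UNIV_less)

lemma frame_in_proj_tuples: "(frame :: (real^'n::finite) set list) \<in> proj_tuples (CARD('n) + 1)"
proof -
  have "span {w} \<in> proj_space" if "w \<noteq> 0" for w :: "real^'n"
    using that proj_space_iff by blast
  moreover have "vec 1 \<noteq> (0::real^'n)" by (simp add: vec_eq_iff)
  moreover have "axis c 1 \<noteq> (0::real^'n)" for c by (simp add: axis_eq_0_iff)
  ultimately show ?thesis
    by (auto simp: proj_tuples_def frame_def simp del: vec_1)
qed

lemma eigenvector_of_fixed_line:
  assumes "act_line g (span {v}) = span {v}"
  obtains l where "g *v v = l *\<^sub>R v"
proof -
  have "g *v v \<in> act_line g (span {v})"
    unfolding act_line_def by (intro imageI span_base) simp
  then show thesis using assms that by (auto simp: span_singleton)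
qed

(* A matrix fixing the frame is scalar: it is diagonal since it fixes the axes,
  with equal diagonal entries since it fixes the line through (1,...,1). *)
lemma frame_stabiliser_is_scalar:
  fixes h :: "real^'n::finite^'n"
  assumes "map (act_line h) frame = frame"
  obtains m where "h = mat m"
proof -
  have fixed: "act_line h (frame ! k) = frame ! k" if "k < CARD('n) + 1" for k
    using assms that by (metis length_frame nth_map)
  have off_diagonal: "h $ d $ c = 0" if "d \<noteq> c" for c d
  proof -
    obtain l where "h *v axis c 1 = l *\<^sub>R axis c 1"
      using fixed[of "Suc (to_nat_on UNIV c)"] to_nat_on_UNIV_less[of c]
      by (auto simp: frame_nth_coordinate elim: eigenvector_of_fixed_line)
    then have "(h *v axis c 1) $ d = 0" using that by (simp add: axis_def)
    then show ?thesis by (simp add: matrix_vector_mult_basis column_def)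
  qed
  obtain m where m: "h *v vec 1 = m *\<^sub>R vec 1"
    using fixed[of 0] by (auto simp: frame_nth_0 elim: eigenvector_of_fixed_line)
  have "h $ d $ d = m" for d
  proof -
    have "(h *v vec 1) $ d = (\<Sum>j\<in>UNIV. h $ d $ j)" by (simp add: matrix_vector_mult_def)
    also have "\<dots> = h $ d $ d"
      by (subst sum.remove[of _ d]) (auto simp: off_diagonal intro!: sum.neutral)
    finally show ?thesis using m by simp
  qed
  then have "h = mat m" by (simp add: vec_eq_iff mat_def off_diagonal)
  then show thesis by (rule that)
qed

lemma det_mat: "det (mat m :: 'a::comm_ring_1^'n::finite^'n) = m ^ CARD('n)"
  by (subst det_diagonal) (simp_all add: mat_def)

(* For even n, scalar matrices m I have determinant m^n > 0; this is where
  evenness enters. *)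
lemma frame_stabiliser_preserves_orientation:
  fixes h :: "real^'n::finite^'n"
  assumes even: "even CARD('n)" and "invertible h" and "map (act_line h) frame = frame"
  shows "eps h = 1"
proof -
  obtain m where h: "h = mat m" using frame_stabiliser_is_scalar assms(3) by blast
  have "det h \<noteq> 0" using assms(2) by (simp add: invertible_det_nz)
  then have "m \<noteq> 0" by (simp add: h det_mat)
  then have "det h > 0" using even by (simp add: h det_mat zero_less_power_eq)
  then show ?thesis by (simp add: eps_def)
qed

lemma eps_determined_by_frame_image:
  fixes g1 g2 :: "real^'n::finite^'n"
  assumes even: "even CARD('n)" and inv: "invertible g1" "invertible g2"
    and same: "map (act_line g1) frame = map (act_line g2) frame"
  shows "eps g1 = eps g2"
proof -
  obtain g1' where right: "g1 ** g1' = mat 1" and left: "g1' ** g1 = mat 1"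
    using inv(1) unfolding invertible_def by blast
  define h where "h = g1' ** g2"
  have "invertible h"
    unfolding h_def using left right inv(2) invertible_def invertible_mult by blast
  moreover have "map (act_line h) frame = frame"
  proof -
    have "map (act_line h) frame = map (act_line g1') (map (act_line g1) frame)"
      by (simp only: h_def map_act_line_mult same)
    then show ?thesis by (simp only: map_act_line_inverse[OF left])
  qed
  ultimately have "eps h = 1" by (rule frame_stabiliser_preserves_orientation[OF even])
  moreover have "g2 = g1 ** h"
    by (simp add: h_def matrix_mul_assoc right)
  ultimately show ?thesis by (simp add: eps_mult)
qed

definition in_frame_orbit :: "(real^'n::finite) set list \<Rightarrow> bool" where
  "in_frame_orbit xs \<longleftrightarrow> (\<exists>g::real^'n^'n. invertible g \<and> map (act_line g) frame = xs)"

lemma in_frame_orbit_act: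
  fixes g :: "real^'n::finite^'n"
  assumes "invertible g"
  shows "in_frame_orbit (map (act_line g) xs) \<longleftrightarrow> in_frame_orbit xs"
proof
  assume "in_frame_orbit xs"
  then obtain h :: "real^'n^'n" where "invertible h" "map (act_line h) frame = xs"
    unfolding in_frame_orbit_def by blast
  then show "in_frame_orbit (map (act_line g) xs)"
    unfolding in_frame_orbit_def
    by (metis assms invertible_mult map_act_line_mult)
next
  obtain g' where right: "g ** g' = mat 1" and left: "g' ** g = mat 1"
    using assms unfolding invertible_def by blast
  assume "in_frame_orbit (map (act_line g) xs)"
  then obtain h :: "real^'n^'n" where "invertible h" "map (act_line h) frame = map (act_line g) xs"
    unfolding in_frame_orbit_def by blast
  moreover have "invertible g'" using left right invertible_def by blast
  ultimately show "in_frame_orbit xs"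
    unfolding in_frame_orbit_def
    by (metis invertible_mult map_act_line_mult map_act_line_inverse[OF left])
qed

lemma spanning_if_no_reversing_stabiliser:
  fixes xs :: "(real^'n::finite) set list"
  assumes xs: "xs \<in> proj_tuples q" and r: "\<And>k. k < q \<Longrightarrow> xs ! k = span {r k}"
    and not_reversed: "\<not> has_reversing_stabiliser xs"
  shows "span (r ` ({..<q} - {j})) = UNIV"
proof (rule ccontr)
  let ?S = "r ` ({..<q} - {j})"
  assume "span ?S \<noteq> UNIV"
  then have "dim ?S \<noteq> CARD('n)" using dim_eq_full[of ?S] by simp
  then have "dim ?S < CARD('n)" using dim_subset_UNIV[of ?S] by simp
  moreover have "xs ! k \<subseteq> span ?S" if "k < q" "k \<noteq> j" for k
  proof -
    have "span {r k} \<subseteq> span ?S" using that by (intro span_mono) auto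
    then show ?thesis using r[OF that(1)] by simp
  qed
  ultimately show False
    using reversing_stabiliser_if_degenerate[OF xs] not_reversed by blast
qed

(* If v = \<Sum>\<^sub>c' a_c' w_c' and v together with all w_c' other than w_c spans R^n,
  then a_c \<noteq> 0: otherwise n - 1 vectors would span R^n. *)
lemma coefficient_nonzero_if_spanning:
  fixes w :: "'n::finite \<Rightarrow> real^'n"
  assumes spans: "span (insert (\<Sum>c\<in>UNIV. a $ c *\<^sub>R w c) (w ` (UNIV - {c}))) = UNIV"
  shows "a $ c \<noteq> 0"
proof
  assume "a $ c = 0"
  have "a $ c' *\<^sub>R w c' \<in> span (w ` (UNIV - {c}))" for c'
  proof (cases "c' = c")
    case False
    then show ?thesis by (intro span_scale span_base) simp
  qed (simp add: \<open>a $ c = 0\<close> span_zero)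
  then have "(\<Sum>c'\<in>UNIV. a $ c' *\<^sub>R w c') \<in> span (w ` (UNIV - {c}))"
    by (intro span_sum)
  then have "span (w ` (UNIV - {c})) = UNIV"
    using spans by (simp add: span_redundant)
  then have "CARD('n) \<le> card (w ` (UNIV - {c}))"
    using dim_le_card[of "UNIV :: (real^'n) set" "w ` (UNIV - {c})"] by simp
  also have "\<dots> \<le> card (UNIV - {c})" by (rule card_image_le) simp
  also have "\<dots> < CARD('n)" by (simp add: card_Diff_singleton)
  finally show False by simp
qed

lemma surj_if_range_spans:
  fixes g :: "real^'m::finite^'n::finite"
  assumes "span B = UNIV" "B \<subseteq> range (\<lambda>x. g *v x)"
  shows "surj (\<lambda>x. g *v x)"
proof -
  have "subspace (range (\<lambda>x. g *v x))"
    by (rule linear_subspace_image[OF matrix_vector_mul_linear subspace_UNIV])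
  then have "span B \<subseteq> range (\<lambda>x. g *v x)" using assms(2) by (rule span_minimal[rotated])
  then show ?thesis using assms(1) by auto
qed

lemma invertible_iff_surj: "invertible (g :: real^'n::finite^'n) \<longleftrightarrow> surj (\<lambda>x. g *v x)"
  by (simp add: invertible_right_inverse matrix_right_invertible_surjective)

lemma lines_except_first:
  "r ` ({..<CARD('n::finite) + 1} - {0}) = range (\<lambda>c::'n. r (Suc (to_nat_on UNIV c)))"
proof -
  have "{..<CARD('n) + 1} - {0} = Suc ` range (to_nat_on (UNIV :: 'n set))"
    by (auto simp: range_to_nat_on_UNIV lessThan_Suc_eq_insert_0)
  then show ?thesis by (simp add: image_image)
qed

lemma lines_except_coordinate:
  "r ` ({..<CARD('n::finite) + 1} - {Suc (to_nat_on UNIV c)})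
     = insert (r 0) ((\<lambda>c::'n. r (Suc (to_nat_on UNIV c))) ` (UNIV - {c}))"
proof -
  have "to_nat_on UNIV ` (UNIV - {c}) = {..<CARD('n)} - {to_nat_on UNIV c}"
    by (simp add: image_set_diff inj_on_to_nat_on countable_finite range_to_nat_on_UNIV)
  then have "{..<CARD('n) + 1} - {Suc (to_nat_on UNIV c)}
      = insert 0 (Suc ` to_nat_on UNIV ` (UNIV - {c}))"
    by (auto simp: lessThan_Suc_eq_insert_0)
  then show ?thesis by (simp add: image_image)
qed

(* Every (n+1)-tuple without orientation-reversing stabiliser is the image of
  the frame: with representatives r_0 and w_c, write r_0 = \<Sum> a_c w_c (all a_c \<noteq> 0) and
  take the matrix with columns a_c w_c. *)
lemma frame_orbit_if_no_reversing_stabiliser: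
  fixes xs :: "(real^'n::finite) set list"
  assumes xs: "xs \<in> proj_tuples (CARD('n) + 1)"
    and not_reversed: "\<not> has_reversing_stabiliser xs"
  shows "in_frame_orbit xs"
proof -
  let ?n = "CARD('n)"
  obtain r where r: "\<And>k. k < ?n + 1 \<Longrightarrow> r k \<noteq> 0 \<and> xs ! k = span {r k}"
    using proj_tuples_representatives[OF xs] by blast
  have spans: "span (r ` ({..<?n + 1} - {j})) = UNIV" for j
    using spanning_if_no_reversing_stabiliser[OF xs _ not_reversed] r by blast
  define w where "w c = r (Suc (to_nat_on UNIV c))" for c :: 'n
  have w_spans: "span (range w) = UNIV"
    using spans[of 0] unfolding lines_except_first w_def .
  define B :: "real^'n^'n" where "B = (\<chi> i c. w c $ i)"
  have B_apply: "B *v x = (\<Sum>c\<in>UNIV. x $ c *\<^sub>R w c)" for x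
    by (simp add: matrix_mult_sum scalar_mult_eq_scaleR column_def B_def)
  have "surj (\<lambda>x. B *v x)"
  proof (rule surj_if_range_spans[OF w_spans])
    have "B *v axis c 1 = w c" for c
      by (simp add: matrix_vector_mult_basis column_def B_def vec_eq_iff)
    then show "range w \<subseteq> range (\<lambda>x. B *v x)" by (metis image_subsetI rangeI)
  qed
  then obtain a where a: "r 0 = (\<Sum>c\<in>UNIV. a $ c *\<^sub>R w c)"
    using B_apply by (metis surjD)
  have a_nonzero: "a $ c \<noteq> 0" for c
  proof (rule coefficient_nonzero_if_spanning)
    show "span (insert (\<Sum>c\<in>UNIV. a $ c *\<^sub>R w c) (w ` (UNIV - {c}))) = UNIV"
      using spans[of "Suc (to_nat_on UNIV c)"] unfolding lines_except_coordinate a w_def .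
  qed
  define g :: "real^'n^'n" where "g = (\<chi> i c. a $ c * w c $ i)"
  have g_axis: "g *v axis c 1 = a $ c *\<^sub>R w c" for c
    by (simp add: matrix_vector_mult_basis column_def g_def vec_eq_iff)
  have g_one: "g *v vec 1 = r 0"
    by (simp add: a matrix_mult_sum scalar_mult_eq_scaleR column_def g_def vec_eq_iff)
  have "surj (\<lambda>x. g *v x)"
  proof (rule surj_if_range_spans[OF w_spans])
    have "g *v (inverse (a $ c) *\<^sub>R axis c 1) = w c" for c
      using a_nonzero[of c] by (simp add: matrix_vector_mult_scaleR g_axis)
    then show "range w \<subseteq> range (\<lambda>x. g *v x)" by (metis image_subsetI rangeI)
  qed
  then have "invertible g" by (simp add: invertible_iff_surj)
  moreover have "map (act_line g) frame = xs"
  proof (rule nth_equalityI)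
    show "length (map (act_line g) frame) = length xs" using xs by (simp add: proj_tuples_def)
    fix k assume "k < length (map (act_line g) frame)"
    then have k: "k < ?n + 1" by simp
    show "map (act_line g) frame ! k = xs ! k"
    proof (cases k)
      case 0
      then show ?thesis using r[OF k] by (simp add: frame_nth_0 act_line_span g_one del: vec_1)
    next
      case (Suc m)
      define c :: 'n where "c = from_nat_into UNIV m"
      have m: "m < ?n" and "to_nat_on UNIV c = m" using k Suc by (simp_all add: c_def)
      then have "span {g *v axis c 1} = xs ! k"
        using r[OF k] Suc by (simp add: g_axis span_scaleR_singleton a_nonzero w_def)
      then show ?thesis using m Suc by (simp add: frame_nth_Suc act_line_span c_def)
    qed
  qed
  ultimately show ?thesis unfolding in_frame_orbit_def by blast
qed

definition frame_invariant :: "(real^'n::finite) set list \<Rightarrow> real" where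
  "frame_invariant xs =
     (if in_frame_orbit xs
      then eps (SOME g::real^'n^'n. invertible g \<and> map (act_line g) frame = xs) else 0)"

lemma frame_invariant_on_orbit:
  fixes g :: "real^'n::finite^'n"
  assumes even: "even CARD('n)" and g: "invertible g"
  shows "frame_invariant (map (act_line g) frame) = eps g"
proof -
  let ?xs = "map (act_line g) frame"
  have "\<exists>g'::real^'n^'n. invertible g' \<and> map (act_line g') frame = ?xs" using g by blast
  then have "eps (SOME g'::real^'n^'n. invertible g' \<and> map (act_line g') frame = ?xs) = eps g"
    by (rule someI2_ex) (use eps_determined_by_frame_image[OF even _ g] in blast)
  then show ?thesis using g by (auto simp: frame_invariant_def in_frame_orbit_def)
qed

lemma frame_invariant_frame:
  assumes "even CARD('n::finite)"
  shows "frame_invariant (frame :: (real^'n) set list) = 1"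
proof -
  have "map (act_line (mat 1)) frame = (frame :: (real^'n) set list)"
    by (metis act_line_id map_idI)
  moreover have "invertible (mat 1 :: real^'n^'n)" by (simp add: invertible_det_nz)
  ultimately show ?thesis
    using frame_invariant_on_orbit[OF assms] by (metis det_I eps_def sgn_one)
qed

lemma frame_invariant_equivariant:
  assumes even: "even CARD('n::finite)"
  shows "equivariant (CARD('n) + 1) (frame_invariant :: (real^'n) set list \<Rightarrow> real)"
  unfolding equivariant_def
proof (intro allI impI ballI)
  fix g :: "real^'n^'n" and xs :: "(real^'n) set list"
  assume g: "invertible g"
  show "frame_invariant (map (act_line g) xs) = eps g * frame_invariant xs"
  proof (cases "in_frame_orbit xs")
    case True
    then obtain g0 :: "real^'n^'n" where g0: "invertible g0" and xs: "xs = map (act_line g0) frame"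
      unfolding in_frame_orbit_def by blast
    have "map (act_line g) xs = map (act_line (g ** g0)) frame"
      by (simp only: xs map_act_line_mult)
    then have "frame_invariant (map (act_line g) xs) = eps (g ** g0)"
      using frame_invariant_on_orbit[OF even invertible_mult[OF g g0]] by simp
    also have "\<dots> = eps g * frame_invariant xs"
      by (simp add: eps_mult xs frame_invariant_on_orbit[OF even g0])
    finally show ?thesis .
  next
    case False
    then show ?thesis using in_frame_orbit_act[OF g] by (simp add: frame_invariant_def)
  qed
qed

lemma equivariant_determined_by_frame:
  fixes f :: "(real^'n::finite) set list \<Rightarrow> real"
  assumes even: "even CARD('n)" and f: "equivariant (CARD('n) + 1) f"
    and xs: "xs \<in> proj_tuples (CARD('n) + 1)"
  shows "f xs = frame_invariant xs * f frame"
proof (cases "in_frame_orbit xs")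
  case True
  then obtain g :: "real^'n^'n" where g: "invertible g" and xs: "xs = map (act_line g) frame"
    unfolding in_frame_orbit_def by blast
  have "f xs = eps g * f frame"
    using f g frame_in_proj_tuples unfolding equivariant_def xs by blast
  then show ?thesis by (simp add: xs frame_invariant_on_orbit[OF even g])
next
  case False
  then have "has_reversing_stabiliser xs"
    using frame_orbit_if_no_reversing_stabiliser[OF xs] by blast
  then show ?thesis
    using equivariant_vanishes[OF f xs] False by (simp add: frame_invariant_def)
qed

theorem proposition3p1:
  assumes "even CARD('n::finite)"
  shows "(\<exists>f :: (real^'n) set list \<Rightarrow> real.
            equivariant (CARD('n) + 1) f \<and> nonzero_map (CARD('n) + 1) f)
       \<and> (\<forall>f h :: (real^'n) set list \<Rightarrow> real.
            equivariant (CARD('n) + 1) f \<and> nonzero_map (CARD('n) + 1) f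
            \<and> equivariant (CARD('n) + 1) h
            \<longrightarrow> (\<exists>c::real. \<forall>xs \<in> proj_tuples (CARD('n) + 1). h xs = c * f xs))
       \<and> (\<forall>q \<le> CARD('n). \<forall>f :: (real^'n) set list \<Rightarrow> real.
            equivariant q f \<longrightarrow> \<not> nonzero_map q f)"
proof (intro conjI allI impI)
  show "\<exists>f :: (real^'n) set list \<Rightarrow> real.
      equivariant (CARD('n) + 1) f \<and> nonzero_map (CARD('n) + 1) f"
    using frame_invariant_equivariant[OF assms] frame_invariant_frame[OF assms]
      frame_in_proj_tuples
    unfolding nonzero_map_def by force
next
  fix f h :: "(real^'n) set list \<Rightarrow> real"
  assume "equivariant (CARD('n) + 1) f \<and> nonzero_map (CARD('n) + 1) f
    \<and> equivariant (CARD('n) + 1) h"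
  then have f: "equivariant (CARD('n) + 1) f" and h: "equivariant (CARD('n) + 1) h"
    and "nonzero_map (CARD('n) + 1) f" by auto
  then have "f frame \<noteq> 0"
    unfolding nonzero_map_def using equivariant_determined_by_frame[OF assms f] by force
  then have "h xs = (h frame / f frame) * f xs" if "xs \<in> proj_tuples (CARD('n) + 1)" for xs
    using equivariant_determined_by_frame[OF assms f that]
      equivariant_determined_by_frame[OF assms h that] by simp
  then show "\<exists>c. \<forall>xs \<in> proj_tuples (CARD('n) + 1). h xs = c * f xs" by blast
next
  fix q and f :: "(real^'n) set list \<Rightarrow> real"
  assume "q \<le> CARD('n)" and "equivariant q f"
  then show "\<not> nonzero_map q f"
    unfolding nonzero_map_def
    using equivariant_vanishes short_tuples_have_reversing_stabiliser by blast
qed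

end
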